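(* Let $\mathbf X=\{X_n\}$ and $\mathbf Y=\{Y_n\}$ be general sources such that $$\inf_{0<\epsilon<1}\ \liminf_{n\to\infty}\ \inf_{0\le\delta<1-\epsilon}\{c_n^x(\delta+\epsilon)-c_n^y(\delta)\}\ \ge 0 .$$ Then there exist joint pmfs $P_{X_nY_n}$ on $\mathcal X_n\times\mathcal Y_n$ with marginals $P_{X_n}$ and $P_{Y_n}$, for each $n$, such that for every $\gamma>0$ $$\lim_{n\to\infty}P_{X_nY_n}\Big\{\log\tfrac{1}{P_{X_n}(X_n)}-\log\tfrac{1}{P_{Y_n}(Y_n)}<-\gamma\Big\}=0 .$$ In other words, $\text{p-}\liminf_{n\to\infty}\{\log\frac{1}{P_{X_n}(X_n)}-\log\frac{1}{P_{Y_n}(Y_n)}\}\ge 0$ under $P_{X_nY_n}$.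
   Context: Logarithms are natural. A general source $\mathbf X=\{X_n\}_{n\ge1}$ is a sequence of random variables, $X_n$ taking values in a countable set $\mathcal X_n$, with no consistency requirements between different $n$. Similarly $Y_n$ takes values in a countable set $\mathcal Y_n$. For a random variable $Z$ on a countable set $\mathcal Z$ with pmf $P_Z$, list the elements of positive probability as $z_1,z_2,\dots$ (a finite or countably infinite list) with $P_Z(z_1)\ge P_Z(z_2)\ge\cdots$ (ties broken arbitrarily). Set $\delta_0=0$ and $\delta_k=\sum_{i\le k}P_Z(z_i)$. For $\delta\in[0,1)$ define $c^z(\delta)=\log\frac{1}{P_Z(z_k)}$, where $k$ is the unique index with $\delta\in[\delta_{k-1},\delta_k)$. Here $c_n^x$ and $c_n^y$ denote this function built from $P_{X_n}$ and from $P_{Y_n}$ respectively. *)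

theory Defs
  imports "HOL-Probability.Probability"
begin

definition dec_enum :: "'a pmf \<Rightarrow> enat \<Rightarrow> (nat \<Rightarrow> 'a) \<Rightarrow> bool" where
  "dec_enum p N z \<longleftrightarrow>
     bij_betw z {k. enat k < N} (set_pmf p) \<and>
     (\<forall>i j. enat j < N \<longrightarrow> i \<le> j \<longrightarrow> pmf p (z j) \<le> pmf p (z i))"

text \<open>The function c(delta) of the paper: with delta_k = sum of the k largest
  probabilities, c(delta) = log (1 / P(z_k)) for the (1-indexed) k with
  delta in [delta_{k-1}, delta_k). In 0-indexed form: the index k with
  sum_{i<k} P(z_i) <= delta < sum_{i<=k} P(z_i). Ties are broken by an arbitrary
  (chosen) decreasing enumeration.\<close>
definition cfun :: "'a pmf \<Rightarrow> real \<Rightarrow> real" where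
  "cfun p \<delta> =
     (let N = (SOME N. \<exists>z. dec_enum p N z);
          z = (SOME z. dec_enum p N z);
          k = (THE k. enat k < N \<and> (\<Sum>i<k. pmf p (z i)) \<le> \<delta> \<and> \<delta> < (\<Sum>i\<le>k. pmf p (z i)))
      in ln (1 / pmf p (z k)))"

end

theory Submission
  imports Defs
begin

text \<open>
  Proof idea: the quantile coupling.  Enumerate the support of a pmf \<open>p\<close> by
  non-increasing probability, \<open>z\<^sub>0, z\<^sub>1, \<dots>\<close>, with cumulative sums
  \<open>cum p k = p z\<^sub>0 + \<dots> + p z\<^sub>k\<^sub>-\<^sub>1\<close>, and let \<open>quantile p \<delta> = z\<^sub>k\<close> for the \<open>k\<close> with
  \<open>\<delta> \<in> [cum p k, cum p (k+1))\<close>; then \<open>cfun p \<delta> = ln (1 / pmf p (quantile p \<delta>))\<close>.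
  If \<open>U\<close> is uniform on \<open>[0,1)\<close> and \<open>T\<close> maps \<open>[0,1)\<close> to itself preserving the length of
  interval preimages, \<open>quantile p (T U)\<close> has law \<open>p\<close>.  For \<open>e \<in> [0,1]\<close> the pair
  \<open>(quantile p ((U + e) mod 1), quantile q U)\<close> is therefore a coupling of \<open>p\<close> and \<open>q\<close>, and
  off the event \<open>U \<ge> 1 - e\<close> (probability \<open>e\<close>) its self-information difference is
  \<open>cfun p (U + e) - cfun q U\<close>.  The hypothesis bounds this from below by any \<open>-\<eta>\<close>,
  eventually in \<open>n\<close>, for each fixed \<open>\<epsilon>\<close>; a diagonal choice \<open>\<epsilon>\<^sub>n \<longrightarrow> 0\<close> gives couplings
  whose bad events have probability at most \<open>\<epsilon>\<^sub>n\<close>.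
\<close>

text \<open>Only finitely many points carry mass at least \<open>c > 0\<close>; this is what makes a
  decreasing enumeration of the support possible.\<close>

lemma finite_pmf_ge:
  fixes p :: "'a pmf"
  assumes c: "c > 0"
  shows "finite {x. pmf p x \<ge> c}"
proof (rule ccontr)
  assume inf: "infinite {x. pmf p x \<ge> c}"
  obtain n :: nat where n: "1 / c < real n" using reals_Archimedean2 by blast
  obtain F where F: "F \<subseteq> {x. pmf p x \<ge> c}" "finite F" "card F = n"
    using infinite_arbitrarily_large[OF inf] by blast
  have "real n * c = (\<Sum>x\<in>F. c)" using F by simp
  also have "\<dots> \<le> (\<Sum>x\<in>F. pmf p x)" using F by (intro sum_mono) auto
  also have "\<dots> = measure p F" using F by (simp add: measure_measure_pmf_finite)
  also have "\<dots> \<le> 1" by simp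
  finally show False using n c by (simp add: field_simps)
qed

lemma downward_closed_nat_set:
  fixes D :: "nat set"
  assumes down: "\<And>k j. k \<in> D \<Longrightarrow> j < k \<Longrightarrow> j \<in> D"
  shows "\<exists>N. D = {k. enat k < N}"
proof (cases "finite D")
  case True
  have "D \<subseteq> {..<card D}"
  proof
    fix m assume "m \<in> D"
    then have "{..m} \<subseteq> D" using down by (auto simp: le_less)
    then have "card {..m} \<le> card D" using True card_mono by blast
    then show "m \<in> {..<card D}" by simp
  qed
  then have "D = {..<card D}" using True by (simp add: card_subset_eq)
  then show ?thesis by (intro exI[of _ "enat (card D)"]) auto
next
  case False
  have "k \<in> D" for k
  proof -
    obtain m where "m \<in> D" "k < m" using False
      by (meson finite_nat_set_iff_bounded_le not_le)
    then show ?thesis using down by blast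
  qed
  then show ?thesis by (intro exI[of _ \<infinity>]) auto
qed

text \<open>A strict total order in which every element has finitely many predecessors is
  enumerated increasingly by an initial segment of \<open>\<nat>\<close>: send each element to its rank,
  the number of its predecessors.\<close>

lemma rank_enumeration:
  fixes lt :: "'a \<Rightarrow> 'a \<Rightarrow> bool"
  assumes trans: "\<And>a b c. lt a b \<Longrightarrow> lt b c \<Longrightarrow> lt a c"
    and irrefl: "\<And>a. \<not> lt a a"
    and total: "\<And>a b. a \<in> S \<Longrightarrow> b \<in> S \<Longrightarrow> a \<noteq> b \<Longrightarrow> lt a b \<or> lt b a"
    and finite_below: "\<And>a. a \<in> S \<Longrightarrow> finite {b\<in>S. lt b a}"
  shows "\<exists>N z. bij_betw z {k. enat k < N} S \<and>
           (\<forall>i j. enat j < N \<longrightarrow> i < j \<longrightarrow> lt (z i) (z j))"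
proof -
  define below where "below a = {b\<in>S. lt b a}" for a
  define r where "r a = card (below a)" for a
  have r_mono: "r a < r b" if "a \<in> S" "b \<in> S" "lt a b" for a b
  proof -
    have "below a \<subseteq> below b" unfolding below_def using that(3) trans by auto
    moreover have "a \<in> below b - below a" unfolding below_def using that irrefl by auto
    ultimately have "below a \<subset> below b" by blast
    then show ?thesis unfolding r_def using finite_below[OF that(2)]
      by (simp add: below_def psubset_card_mono)
  qed
  have r_inj: "inj_on r S"
  proof (rule inj_onI, rule ccontr)
    fix a b assume ab: "a \<in> S" "b \<in> S" "r a = r b" "a \<noteq> b"
    then have "lt a b \<or> lt b a" using total by blast
    then show False using r_mono ab by fastforce
  qed
  have down: "j \<in> r ` S" if k: "k \<in> r ` S" and jk: "j < k" for j k
  proof -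
    obtain a where a: "a \<in> S" "k = r a" using k by auto
    have "r ` below a \<subseteq> {..<k}" using a r_mono unfolding below_def by auto
    moreover have "inj_on r (below a)"
      using r_inj by (rule inj_on_subset) (auto simp: below_def)
    then have "card (r ` below a) = k" using a by (simp add: card_image r_def[symmetric])
    ultimately have "r ` below a = {..<k}" by (simp add: card_subset_eq)
    then show ?thesis using jk unfolding below_def by auto
  qed
  obtain N where N: "r ` S = {k. enat k < N}"
    using downward_closed_nat_set[of "r ` S"] down by blast
  define z where "z = inv_into S r"
  have bij: "bij_betw z {k. enat k < N} S"
    unfolding z_def N[symmetric] using r_inj by (simp add: bij_betw_inv_into inj_on_imp_bij_betw)
  have "lt (z i) (z j)" if "enat j < N" "i < j" for i j
  proof -
    have "i \<in> r ` S" "j \<in> r ` S"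
      using that N by (auto simp: order.strict_trans[of "enat i" "enat j"])
    then have zS: "z i \<in> S" "z j \<in> S" and rz: "r (z i) = i" "r (z j) = j"
      unfolding z_def by (auto simp: inv_into_into f_inv_into_f)
    have "\<not> lt (z j) (z i)" using r_mono[OF zS(2,1)] rz that(2) by auto
    moreover have "z i \<noteq> z j" using rz that(2) by auto
    ultimately show ?thesis using total[OF zS] by blast
  qed
  then show ?thesis using bij by blast
qed

text \<open>Every pmf has a decreasing enumeration: order the support by decreasing mass,
  breaking ties by a fixed injection into \<open>\<nat>\<close>.\<close>

lemma dec_enum_exists: "\<exists>N z. dec_enum p N z"
proof -
  define t where "t = to_nat_on (set_pmf p)"
  have t_inj: "inj_on t (set_pmf p)" unfolding t_def by (intro inj_on_to_nat_on) simp
  define lt where "lt b a \<longleftrightarrow> pmf p a < pmf p b \<or> (pmf p a = pmf p b \<and> t b < t a)" for a b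
  have "\<exists>N z. bij_betw z {k. enat k < N} (set_pmf p) \<and>
           (\<forall>i j. enat j < N \<longrightarrow> i < j \<longrightarrow> lt (z i) (z j))"
  proof (rule rank_enumeration)
    show "lt a c" if "lt a b" "lt b c" for a b c using that unfolding lt_def by auto
    show "\<not> lt a a" for a unfolding lt_def by auto
    show "lt a b \<or> lt b a" if "a \<in> set_pmf p" "b \<in> set_pmf p" "a \<noteq> b" for a b
    proof -
      have "t a \<noteq> t b" using t_inj that unfolding inj_on_def by blast
      then show ?thesis unfolding lt_def by linarith
    qed
    show "finite {b\<in>set_pmf p. lt b a}" if "a \<in> set_pmf p" for a
    proof (rule finite_subset)
      show "{b\<in>set_pmf p. lt b a} \<subseteq> {x. pmf p x \<ge> pmf p a}" unfolding lt_def by auto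
      show "finite {x. pmf p x \<ge> pmf p a}" using that by (intro finite_pmf_ge) (simp add: pmf_positive)
    qed
  qed
  then obtain N z where bij: "bij_betw z {k. enat k < N} (set_pmf p)"
      and order: "\<And>i j. enat j < N \<Longrightarrow> i < j \<Longrightarrow> lt (z i) (z j)"
    by blast
  have "pmf p (z j) \<le> pmf p (z i)" if "enat j < N" "i \<le> j" for i j
    using order[OF that(1), of i] that(2) unfolding lt_def by (cases "i = j") auto
  then show ?thesis unfolding dec_enum_def using bij by blast
qed

lemma dec_enum_inj: "dec_enum p N z \<Longrightarrow> inj_on z {k. enat k < N}"
  unfolding dec_enum_def bij_betw_def by auto

lemma dec_enum_mem: "dec_enum p N z \<Longrightarrow> enat k < N \<Longrightarrow> z k \<in> set_pmf p"
  unfolding dec_enum_def bij_betw_def by auto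

lemma dec_enum_surj: "dec_enum p N z \<Longrightarrow> a \<in> set_pmf p \<Longrightarrow> \<exists>k. enat k < N \<and> z k = a"
  unfolding dec_enum_def bij_betw_def by (metis (mono_tags, lifting) image_iff mem_Collect_eq)

text \<open>Partial sums along an enumeration are masses of finite sets, hence at most 1.\<close>

lemma dec_enum_partial_sum_le_1:
  assumes d: "dec_enum p N z" and k: "enat k \<le> N"
  shows "(\<Sum>i<k. pmf p (z i)) \<le> 1"
proof -
  have "{..<k} \<subseteq> {i. enat i < N}" using k by (auto intro: order.strict_trans2[of _ "enat k"])
  then have "inj_on z {..<k}" using dec_enum_inj[OF d] inj_on_subset by blast
  then have "(\<Sum>i<k. pmf p (z i)) = measure p (z ` {..<k})"
    by (simp add: sum.reindex measure_measure_pmf_finite)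
  also have "\<dots> \<le> 1" by simp
  finally show ?thesis .
qed

text \<open>The partial sums along an enumeration exhaust the total mass 1, by continuity of the
  measure along the increasing sets of the first \<open>m\<close> enumerated points.\<close>

lemma dec_enum_partial_sums_tendsto:
  assumes d: "dec_enum p N z"
  shows "(\<lambda>m. \<Sum>i | i < m \<and> enat i < N. pmf p (z i)) \<longlonglongrightarrow> 1"
proof -
  define A where "A m = z ` {i. i < m \<and> enat i < N}" for m
  have sums: "(\<Sum>i | i < m \<and> enat i < N. pmf p (z i)) = measure p (A m)" for m
  proof -
    have "inj_on z {i. i < m \<and> enat i < N}"
      using dec_enum_inj[OF d] by (rule inj_on_subset) auto
    then show ?thesis unfolding A_def by (simp add: sum.reindex measure_measure_pmf_finite)
  qed
  have "incseq A" unfolding A_def incseq_def by auto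
  moreover have "(\<Union>m. A m) = set_pmf p"
  proof
    show "(\<Union>m. A m) \<subseteq> set_pmf p" unfolding A_def using dec_enum_mem[OF d] by auto
    show "set_pmf p \<subseteq> (\<Union>m. A m)"
    proof
      fix a assume "a \<in> set_pmf p"
      then obtain k where "enat k < N" "z k = a" using dec_enum_surj[OF d] by blast
      then have "a \<in> A (Suc k)" unfolding A_def by auto
      then show "a \<in> (\<Union>m. A m)" by blast
    qed
  qed
  ultimately have "(\<lambda>m. measure p (A m)) \<longlonglongrightarrow> measure p (set_pmf p)"
    using measure_pmf.finite_Lim_measure_incseq[where A=A] by simp
  then show ?thesis unfolding sums by (simp add: measure_pmf_conv_infsetsum infsetsum_pmf_eq_1)
qed

lemma partial_sum_bracket_unique:
  fixes f :: "nat \<Rightarrow> real"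
  assumes nonneg: "\<And>i. f i \<ge> 0"
    and k: "(\<Sum>i<k. f i) \<le> \<delta>" "\<delta> < (\<Sum>i<Suc k. f i)"
    and l: "(\<Sum>i<l. f i) \<le> \<delta>" "\<delta> < (\<Sum>i<Suc l. f i)"
  shows "k = l"
proof (rule ccontr)
  have mono: "(\<Sum>i<a. f i) \<le> (\<Sum>i<b. f i)" if "a \<le> b" for a b
    using that nonneg by (intro sum_mono2) auto
  assume "k \<noteq> l"
  then consider "Suc k \<le> l" | "Suc l \<le> k" by linarith
  then show False
    by cases (use mono k l in fastforce)+
qed

lemma dec_enum_bracket:
  assumes d: "dec_enum p N z" and \<delta>: "0 \<le> \<delta>" "\<delta> < 1"
  shows "\<exists>k. enat k < N \<and> (\<Sum>i<k. pmf p (z i)) \<le> \<delta> \<and> \<delta> < (\<Sum>i<Suc k. pmf p (z i))"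
proof -
  define I where "I m = {i. i < m \<and> enat i < N}" for m
  define G where "G m = (\<Sum>i\<in>I m. pmf p (z i))" for m
  have "G \<longlonglongrightarrow> 1" unfolding G_def I_def by (rule dec_enum_partial_sums_tendsto[OF d])
  then have "eventually (\<lambda>m. \<delta> < G m) sequentially" using \<delta>(2) by (rule order_tendstoD)
  then have ex: "\<exists>m. \<delta> < G m" by (meson eventually_sequentially order_refl)
  define m where "m = (LEAST m. \<delta> < G m)"
  have above: "\<delta> < G m" unfolding m_def using LeastI_ex[OF ex] .
  have below: "G l \<le> \<delta>" if "l < m" for l using not_less_Least[OF that[unfolded m_def]] by simp
  have "m \<noteq> 0" using above \<delta>(1) unfolding G_def I_def by (intro notI) simp
  then obtain k where mk: "m = Suc k" using not0_implies_Suc by blast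
  have kN: "enat k < N"
  proof (rule ccontr)
    assume "\<not> enat k < N"
    then have "I (Suc k) = I k" unfolding I_def using less_Suc_eq by auto
    then show False using above below[of k] mk unfolding G_def by simp
  qed
  then have "I k = {..<k}" "I (Suc k) = {..<Suc k}"
    unfolding I_def by (auto intro: order.strict_trans1[of _ "enat k"] simp: less_Suc_eq_le)
  then show ?thesis using kN above below[of k] mk unfolding G_def by auto
qed

definition enum_len :: "'a pmf \<Rightarrow> enat" where
  "enum_len p = (SOME N. \<exists>z. dec_enum p N z)"

definition enum :: "'a pmf \<Rightarrow> nat \<Rightarrow> 'a" where
  "enum p = (SOME z. dec_enum p (enum_len p) z)"

definition cum :: "'a pmf \<Rightarrow> nat \<Rightarrow> real" where
  "cum p k = (\<Sum>i<k. pmf p (enum p i))"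

definition quantile_index :: "'a pmf \<Rightarrow> real \<Rightarrow> nat" where
  "quantile_index p \<delta> = (THE k. enat k < enum_len p \<and>
     (\<Sum>i<k. pmf p (enum p i)) \<le> \<delta> \<and> \<delta> < (\<Sum>i\<le>k. pmf p (enum p i)))"

definition quantile :: "'a pmf \<Rightarrow> real \<Rightarrow> 'a" where
  "quantile p \<delta> = enum p (quantile_index p \<delta>)"

lemma dec_enum_enum: "dec_enum p (enum_len p) (enum p)"
proof -
  have "\<exists>z. dec_enum p (enum_len p) z"
    unfolding enum_len_def using dec_enum_exists by (rule someI_ex)
  then show ?thesis unfolding enum_def by (rule someI_ex)
qed

lemma cfun_eq_quantile: "cfun p \<delta> = ln (1 / pmf p (quantile p \<delta>))"
  unfolding cfun_def Let_def quantile_def quantile_index_def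
    enum_len_def[symmetric] enum_def[symmetric] ..

lemma quantile_index_bracket:
  assumes "0 \<le> \<delta>" "\<delta> < 1"
  shows "enat (quantile_index p \<delta>) < enum_len p"
    and "cum p (quantile_index p \<delta>) \<le> \<delta>" "\<delta> < cum p (Suc (quantile_index p \<delta>))"
proof -
  obtain k where k: "enat k < enum_len p" "cum p k \<le> \<delta>" "\<delta> < cum p (Suc k)"
    using dec_enum_bracket[OF dec_enum_enum assms] unfolding cum_def by blast
  have "quantile_index p \<delta> = k" unfolding quantile_index_def
  proof (rule the_equality)
    show "enat k < enum_len p \<and> (\<Sum>i<k. pmf p (enum p i)) \<le> \<delta> \<and> \<delta> < (\<Sum>i\<le>k. pmf p (enum p i))"
      using k unfolding cum_def by (simp add: lessThan_Suc_atMost[symmetric])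
    show "l = k" if "enat l < enum_len p \<and> (\<Sum>i<l. pmf p (enum p i)) \<le> \<delta> \<and> \<delta> < (\<Sum>i\<le>l. pmf p (enum p i))" for l
      using that k unfolding cum_def lessThan_Suc_atMost[symmetric]
      by (intro partial_sum_bracket_unique[of "\<lambda>i. pmf p (enum p i)"]) auto
  qed
  then show "enat (quantile_index p \<delta>) < enum_len p"
    "cum p (quantile_index p \<delta>) \<le> \<delta>" "\<delta> < cum p (Suc (quantile_index p \<delta>))"
    using k by simp_all
qed

lemma quantile_index_eq_iff:
  assumes "0 \<le> \<delta>" "\<delta> < 1"
  shows "quantile_index p \<delta> = k \<longleftrightarrow> \<delta> \<in> {cum p k..<cum p (Suc k)}"
  using quantile_index_bracket[OF assms, of p]
    partial_sum_bracket_unique[of "\<lambda>i. pmf p (enum p i)" k \<delta> "quantile_index p \<delta>"]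
  unfolding cum_def by auto

lemma quantile_in_set_pmf: "0 \<le> \<delta> \<Longrightarrow> \<delta> < 1 \<Longrightarrow> quantile p \<delta> \<in> set_pmf p"
  unfolding quantile_def using quantile_index_bracket(1) dec_enum_mem[OF dec_enum_enum] by blast

lemma measure_quantile_preimage:
  fixes T :: "real \<Rightarrow> real"
  assumes T_range: "\<And>u. u \<in> {0..<1} \<Longrightarrow> T u \<in> {0..<1}"
    and T_preserving: "\<And>a b. 0 \<le> a \<Longrightarrow> a \<le> b \<Longrightarrow> b \<le> 1 \<Longrightarrow>
       measure lborel {u\<in>{0..<1}. T u \<in> {a..<b}} = b - a"
  shows "measure lborel {u\<in>{0..<1}. quantile p (T u) = x} = pmf p x"
proof (cases "x \<in> set_pmf p")
  case True
  obtain k where k: "enat k < enum_len p" "enum p k = x"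
    using dec_enum_surj[OF dec_enum_enum True] by blast
  have "quantile p (T u) = x \<longleftrightarrow> T u \<in> {cum p k..<cum p (Suc k)}" if "u \<in> {0..<1}" for u
  proof -
    have T: "0 \<le> T u" "T u < 1" using T_range[OF that] by auto
    have "quantile p (T u) = x \<longleftrightarrow> quantile_index p (T u) = k"
      using dec_enum_inj[OF dec_enum_enum] quantile_index_bracket(1)[OF T] k
      unfolding quantile_def inj_on_def by auto
    then show ?thesis using quantile_index_eq_iff[OF T] by simp
  qed
  then have "{u\<in>{0..<1}. quantile p (T u) = x} = {u\<in>{0..<1}. T u \<in> {cum p k..<cum p (Suc k)}}"
    by blast
  also have "measure lborel \<dots> = cum p (Suc k) - cum p k"
  proof (rule T_preserving)
    show "0 \<le> cum p k" unfolding cum_def by (simp add: sum_nonneg)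
    show "cum p k \<le> cum p (Suc k)" unfolding cum_def by simp
    show "cum p (Suc k) \<le> 1" unfolding cum_def using k(1)
      by (intro dec_enum_partial_sum_le_1[OF dec_enum_enum]) (simp add: Suc_ile_eq)
  qed
  also have "\<dots> = pmf p x" using k unfolding cum_def by simp
  finally show ?thesis .
next
  case False
  then have "{u\<in>{0..<1}. quantile p (T u) = x} = {}"
    using quantile_in_set_pmf T_range by fastforce
  then show ?thesis using False by (metis measure_empty set_pmf_iff)
qed

definition cyclic_shift :: "real \<Rightarrow> real \<Rightarrow> real" where
  "cyclic_shift e u = (if u + e < 1 then u + e else u + e - 1)"

lemma cyclic_shift_range:
  "0 \<le> e \<Longrightarrow> e \<le> 1 \<Longrightarrow> u \<in> {0..<1} \<Longrightarrow> cyclic_shift e u \<in> {0..<1}"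
  unfolding cyclic_shift_def by auto

lemma measure_lborel_Ico: "measure lborel {a..<b::real} = max 0 (b - a)"
  by (cases "a \<le> b") (simp_all add: measure_def)

lemma cyclic_shift_preserving:
  assumes e: "0 \<le> e" "e \<le> 1" and ab: "0 \<le> a" "a \<le> b" "b \<le> 1"
  shows "measure lborel {u\<in>{0..<1}. cyclic_shift e u \<in> {a..<b}} = b - a"
proof -
  have eq: "{u\<in>{0..<1}. cyclic_shift e u \<in> {a..<b}} =
     {max 0 (a-e)..<min (1-e) (b-e)} \<union> {a+1-e..<min 1 (b+1-e)}"
    using e ab unfolding cyclic_shift_def by (auto split: if_splits)
  have "emeasure lborel {l..<r::real} \<noteq> \<infinity>" for l r by (cases "l \<le> r") auto
  then have "measure lborel ({max 0 (a-e)..<min (1-e) (b-e)} \<union> {a+1-e..<min 1 (b+1-e)})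
      = measure lborel {max 0 (a-e)..<min (1-e) (b-e)} + measure lborel {a+1-e..<min 1 (b+1-e)}"
    using ab by (subst measure_Union) auto
  also have "\<dots> = b - a" unfolding measure_lborel_Ico using e ab by (auto simp: max_def min_def)
  finally show ?thesis unfolding eq .
qed

definition U01 :: "real measure" where
  "U01 = restrict_space lborel {0..<1}"

lemma space_U01: "space U01 = {0..<1}"
  unfolding U01_def by (simp add: space_restrict_space)

lemma measure_U01: "A \<subseteq> {0..<1} \<Longrightarrow> measure U01 A = measure lborel A"
  unfolding U01_def by (intro measure_restrict_space) auto

interpretation U01: prob_space U01
  unfolding U01_def by (rule prob_space_restrict_space) auto

text \<open>They live
  in the countable type \<open>nat \<times> nat\<close>, so their law under \<open>U01\<close> is a pmf.\<close>

definition index_pair :: "real \<Rightarrow> 'a pmf \<Rightarrow> 'b pmf \<Rightarrow> real \<Rightarrow> nat \<times> nat" where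
  "index_pair e p q u = (quantile_index p (cyclic_shift e u), quantile_index q u)"

text \<open>Each fibre of \<open>index_pair\<close> is a Borel set: an intersection of interval preimages.\<close>

lemma index_pair_measurable:
  assumes e: "0 \<le> e" "e \<le> 1"
  shows "index_pair e p q \<in> measurable U01 (count_space UNIV)"
  unfolding measurable_count_space_eq2_countable
proof (intro conjI ballI)
  show "index_pair e p q \<in> space U01 \<rightarrow> UNIV" by simp
  fix w :: "nat \<times> nat"
  obtain k j where w: "w = (k, j)" by fastforce
  define B where "B = {u. cyclic_shift e u \<in> {cum p k..<cum p (Suc k)}} \<inter> {cum q j..<cum q (Suc j)}"
  have "index_pair e p q u = w \<longleftrightarrow> u \<in> B" if u: "u \<in> {0..<1}" for u
    using quantile_index_eq_iff[of "cyclic_shift e u" p k] quantile_index_eq_iff[of u q j]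
      cyclic_shift_range[OF e u] u
    unfolding index_pair_def w B_def by auto
  then have "index_pair e p q -` {w} \<inter> space U01 = {0..<1} \<inter> B"
    unfolding space_U01 by blast
  moreover have "B \<in> sets borel" unfolding B_def cyclic_shift_def by measurable
  ultimately show "index_pair e p q -` {w} \<inter> space U01 \<in> sets U01"
    unfolding U01_def sets_restrict_space by auto
qed

definition index_coupling :: "real \<Rightarrow> 'a pmf \<Rightarrow> 'b pmf \<Rightarrow> (nat \<times> nat) pmf" where
  "index_coupling e p q = Abs_pmf (distr U01 (count_space UNIV) (index_pair e p q))"

lemma measure_index_coupling:
  assumes e: "0 \<le> e" "e \<le> 1"
  shows "measure_pmf.prob (index_coupling e p q) A = measure U01 {u\<in>{0..<1}. index_pair e p q u \<in> A}"
proof -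
  define D where "D = distr U01 (count_space UNIV) (index_pair e p q)"
  interpret D: prob_space D
    unfolding D_def using U01.prob_space_distr[OF index_pair_measurable[OF e]] .
  have sets_D: "sets D = UNIV" unfolding D_def by simp
  have "measure_pmf (index_coupling e p q) = D"
    unfolding index_coupling_def D_def[symmetric]
    using D.prob_space_axioms sets_D D.AE_support_countable[OF sets_D] by (intro Abs_pmf_inverse) auto
  then have "measure_pmf.prob (index_coupling e p q) A = measure U01 (index_pair e p q -` A \<inter> space U01)"
    unfolding D_def by (simp add: measure_distr[OF index_pair_measurable[OF e]])
  also have "index_pair e p q -` A \<inter> space U01 = {u\<in>{0..<1}. index_pair e p q u \<in> A}"
    unfolding space_U01 by auto
  finally show ?thesis .
qed

definition coupling :: "real \<Rightarrow> 'a pmf \<Rightarrow> 'b pmf \<Rightarrow> ('a \<times> 'b) pmf" where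
  "coupling e p q = map_pmf (\<lambda>(k, j). (enum p k, enum q j)) (index_coupling e p q)"

lemma measure_coupling:
  assumes e: "0 \<le> e" "e \<le> 1"
  shows "measure_pmf.prob (coupling e p q) S =
    measure U01 {u\<in>{0..<1}. (quantile p (cyclic_shift e u), quantile q u) \<in> S}"
  unfolding coupling_def measure_map_pmf measure_index_coupling[OF e] index_pair_def quantile_def
  by (simp add: case_prod_beta)

lemma coupling_marginals:
  assumes e: "0 \<le> e" "e \<le> 1"
  shows "map_pmf fst (coupling e p q) = p" and "map_pmf snd (coupling e p q) = q"
proof -
  show "map_pmf fst (coupling e p q) = p"
  proof (rule pmf_eqI)
    fix x
    have "pmf (map_pmf fst (coupling e p q)) x = measure lborel {u\<in>{0..<1}. quantile p (cyclic_shift e u) = x}"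
      unfolding pmf_map measure_coupling[OF e] by (subst measure_U01) auto
    also have "\<dots> = pmf p x"
      using cyclic_shift_range[OF e] cyclic_shift_preserving[OF e] by (rule measure_quantile_preimage)
    finally show "pmf (map_pmf fst (coupling e p q)) x = pmf p x" .
  qed
  show "map_pmf snd (coupling e p q) = q"
  proof (rule pmf_eqI)
    fix y
    have "pmf (map_pmf snd (coupling e p q)) y = measure lborel {u\<in>{0..<1}. quantile q u = y}"
      unfolding pmf_map measure_coupling[OF e] by (subst measure_U01) auto
    also have "\<dots> = pmf q y"
    proof (rule measure_quantile_preimage[where T="\<lambda>u. u"])
      show "measure lborel {u\<in>{0..<1}. u \<in> {a..<b}} = b - a" if "0 \<le> a" "a \<le> b" "b \<le> 1" for a b
      proof -
        have "{u\<in>{0..<1}. u \<in> {a..<b}} = {a..<b}" using that by auto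
        then show ?thesis using that by (simp only:) (simp add: measure_lborel_Ico)
      qed
    qed simp
    finally show "pmf (map_pmf snd (coupling e p q)) y = pmf q y" .
  qed
qed

text \<open>If \<open>cfun p (\<delta> + e) - cfun q \<delta> > -\<gamma>\<close> on \<open>[0, 1 - e)\<close>, the self-information
  difference drops below \<open>-\<gamma>\<close> only where \<open>U \<ge> 1 - e\<close>, an event of probability \<open>e\<close>.\<close>

lemma coupling_bad_event:
  assumes e: "0 \<le> e" "e \<le> 1"
    and good: "\<And>\<delta>. \<delta> \<in> {0..<1-e} \<Longrightarrow> cfun p (\<delta> + e) - cfun q \<delta> > -\<gamma>"
  shows "measure_pmf.prob (coupling e p q)
           {(x, y). ln (1 / pmf p x) - ln (1 / pmf q y) < - \<gamma>} \<le> e"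
proof -
  have "measure_pmf.prob (coupling e p q) {(x, y). ln (1 / pmf p x) - ln (1 / pmf q y) < - \<gamma>}
      = measure U01 {u\<in>{0..<1}. cfun p (cyclic_shift e u) - cfun q u < - \<gamma>}"
    unfolding measure_coupling[OF e] cfun_eq_quantile by simp
  also have "\<dots> \<le> measure U01 {1-e..<1}"
  proof (rule U01.finite_measure_mono)
    show "{u\<in>{0..<1}. cfun p (cyclic_shift e u) - cfun q u < - \<gamma>} \<subseteq> {1-e..<1}"
    proof
      fix u assume u: "u \<in> {u\<in>{0..<1}. cfun p (cyclic_shift e u) - cfun q u < - \<gamma>}"
      show "u \<in> {1-e..<1}"
      proof (rule ccontr)
        assume "u \<notin> {1-e..<1}"
        then have "u \<in> {0..<1-e}" "cyclic_shift e u = u + e"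
          using u unfolding cyclic_shift_def by auto
        then show False using good[of u] u by auto
      qed
    qed
    show "{1-e..<1} \<in> sets U01"
      unfolding U01_def sets_restrict_space using e by (auto intro!: image_eqI[of _ _ "{1-e..<1}"])
  qed
  also have "\<dots> = e" using e by (subst measure_U01) (auto simp: measure_lborel_Ico)
  finally show ?thesis .
qed

lemma eventually_uniform_lower_bound:
  fixes F :: "nat \<Rightarrow> real \<Rightarrow> real \<Rightarrow> real"
  assumes hyp: "(INF \<epsilon>\<in>E. liminf (\<lambda>n. INF \<delta>\<in>D \<epsilon>. ereal (F n \<epsilon> \<delta>))) \<ge> 0"
    and \<epsilon>: "\<epsilon> \<in> E" and \<eta>: "\<eta> > 0"
  shows "eventually (\<lambda>n. \<forall>\<delta>\<in>D \<epsilon>. F n \<epsilon> \<delta> > -\<eta>) sequentially"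
proof -
  have "ereal (-\<eta>) < 0" using \<eta> by simp
  then have "ereal (-\<eta>) < liminf (\<lambda>n. INF \<delta>\<in>D \<epsilon>. ereal (F n \<epsilon> \<delta>))"
    using order.trans[OF hyp INF_lower[OF \<epsilon>]] by (rule order.strict_trans2)
  then have "eventually (\<lambda>n. ereal (-\<eta>) < (INF \<delta>\<in>D \<epsilon>. ereal (F n \<epsilon> \<delta>))) sequentially"
    by (rule less_LiminfD)
  then show ?thesis
    by (rule eventually_mono) (use INF_lower order.strict_trans2 in fastforce)
qed

text \<open>Diagonal choice: if each \<open>\<lambda>n. P n M\<close> holds eventually, some \<open>m\<close> tending to infinity
  has \<open>P n (m n)\<close> for all \<open>n\<close> (take the largest admissible \<open>M \<le> n\<close>).\<close>

lemma diagonal_index: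
  fixes P :: "nat \<Rightarrow> nat \<Rightarrow> bool"
  assumes P0: "\<And>n. P n 0" and eventually_P: "\<And>M. eventually (\<lambda>n. P n M) sequentially"
  obtains m :: "nat \<Rightarrow> nat" where "\<And>n. P n (m n)" "filterlim m at_top sequentially"
proof
  define m where "m n = Max {k. k \<le> n \<and> P n k}" for n
  have fin: "finite {k. k \<le> n \<and> P n k}" for n by simp
  show "P n (m n)" for n
    using Max_in[OF fin, of n] P0 unfolding m_def by auto
  have "eventually (\<lambda>n. M \<le> m n) sequentially" for M
    using eventually_P[of M] eventually_ge_at_top[of M]
    by eventually_elim (auto simp: m_def intro: Max_ge[OF fin])
  then show "filterlim m at_top sequentially" by (simp add: filterlim_at_top)
qed

lemma coupling_bad_event_tendsto:
  fixes p :: "nat \<Rightarrow> 'a pmf" and q :: "nat \<Rightarrow> 'b pmf"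
  assumes e: "\<And>n. 0 \<le> e n" "\<And>n. e n \<le> 1" and e_lim: "e \<longlonglongrightarrow> 0"
    and good: "\<And>n. \<forall>\<delta>\<in>{0..<1 - e n}. cfun (p n) (\<delta> + e n) - cfun (q n) \<delta> > - e n"
    and \<gamma>: "\<gamma> > 0"
  shows "(\<lambda>n. measure_pmf.prob (coupling (e n) (p n) (q n))
           {(x, y). ln (1 / pmf (p n) x) - ln (1 / pmf (q n) y) < - \<gamma>}) \<longlonglongrightarrow> 0"
proof (rule tendsto_sandwich[OF _ _ tendsto_const e_lim])
  show "eventually (\<lambda>n. 0 \<le> measure_pmf.prob (coupling (e n) (p n) (q n))
      {(x, y). ln (1 / pmf (p n) x) - ln (1 / pmf (q n) y) < - \<gamma>}) sequentially" by simp
  show "eventually (\<lambda>n. measure_pmf.prob (coupling (e n) (p n) (q n))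
      {(x, y). ln (1 / pmf (p n) x) - ln (1 / pmf (q n) y) < - \<gamma>} \<le> e n) sequentially"
    using order_tendstoD(2)[OF e_lim \<gamma>]
  proof eventually_elim
    case (elim n)
    show ?case using e good elim by (intro coupling_bad_event) force+
  qed
qed

text \<open>The theorem: use the hypothesis with \<open>\<epsilon> = \<eta> = 1 / (M + 1)\<close>, choose \<open>M = m n\<close>
  diagonally, and take the quantile coupling with shift \<open>1 / (m n + 1)\<close>.\<close>

theorem lemma8:
  fixes PX :: "nat \<Rightarrow> 'a pmf" and PY :: "nat \<Rightarrow> 'b pmf"
  assumes "(INF \<epsilon>\<in>{0<..<1::real}. liminf (\<lambda>n.
              INF \<delta>\<in>{0..<1-\<epsilon>}. ereal (cfun (PX n) (\<delta>+\<epsilon>) - cfun (PY n) \<delta>))) \<ge> 0"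
  shows "\<exists>J :: nat \<Rightarrow> ('a \<times> 'b) pmf.
           (\<forall>n. map_pmf fst (J n) = PX n \<and> map_pmf snd (J n) = PY n) \<and>
           (\<forall>\<gamma>>0. (\<lambda>n. measure_pmf.prob (J n)
                 {(x, y). ln (1 / pmf (PX n) x) - ln (1 / pmf (PY n) y) < - \<gamma>})
               \<longlonglongrightarrow> 0)"
proof -
  define eps :: "nat \<Rightarrow> real" where "eps M = 1 / real (Suc M)" for M
  have eps: "0 \<le> eps M" "eps M \<le> 1" for M unfolding eps_def by auto
  define P where "P n M \<longleftrightarrow>
    (\<forall>\<delta>\<in>{0..<1 - eps M}. cfun (PX n) (\<delta> + eps M) - cfun (PY n) \<delta> > - eps M)" for n M
  have "eventually (\<lambda>n. P n M) sequentially" for M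
  proof (cases M)
    case (Suc k)
    then have "eps M \<in> {0<..<1}" unfolding eps_def by (auto simp: field_simps)
    then show ?thesis unfolding P_def
      by (rule eventually_uniform_lower_bound[where F="\<lambda>n \<epsilon> \<delta>. cfun (PX n) (\<delta>+\<epsilon>) - cfun (PY n) \<delta>",
            OF assms]) (simp add: eps_def)
  qed (simp add: P_def eps_def)
  moreover have "P n 0" for n unfolding P_def eps_def by simp
  ultimately obtain m where good: "\<And>n. P n (m n)" and m: "filterlim m at_top sequentially"
    using diagonal_index by blast
  have e_lim: "(\<lambda>n. eps (m n)) \<longlonglongrightarrow> 0"
    using filterlim_compose[OF LIMSEQ_inverse_real_of_nat m] by (simp add: eps_def inverse_eq_divide)
  show ?thesis
  proof (intro exI[of _ "\<lambda>n. coupling (eps (m n)) (PX n) (PY n)"] conjI allI impI)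
    show "map_pmf fst (coupling (eps (m n)) (PX n) (PY n)) = PX n"
      and "map_pmf snd (coupling (eps (m n)) (PX n) (PY n)) = PY n" for n
      using coupling_marginals[OF eps] by blast+
    show "(\<lambda>n. measure_pmf.prob (coupling (eps (m n)) (PX n) (PY n))
        {(x, y). ln (1 / pmf (PX n) x) - ln (1 / pmf (PY n) y) < - \<gamma>}) \<longlonglongrightarrow> 0" if "\<gamma> > 0" for \<gamma>
      using coupling_bad_event_tendsto[OF eps e_lim good[unfolded P_def] that] .
  qed
qed

end
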